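(* Let $K$ be a field (of arbitrary characteristic), $\phi$ the $K$-algebra endomorphism of $K[x]$ with $\phi(x)=w(x)$ where $\deg w(x)\ge 2$, and $\delta=\mathrm{id}-\phi$. If $f\in K[x]$ satisfies $f^i\in\operatorname{Im}\delta$ for all $1\le i\le 3$, then $f=0$. Consequently, $\mathfrak{r}(\operatorname{Im}\delta)=\{0\}$, and $\delta$ maps every $K$-subspace of $K[x]$ to a Mathieu subspace of $K[x]$.
   Context: $\mathrm{id}$ is the identity map of $K[x]$. For a subset $V$ of $K[x]$, $\mathfrak{r}(V)=\{a\in K[x]\mid a^m\in V\text{ for all } m\gg0\}$. A $K$-subspace $V$ of a commutative $K$-algebra $\mathcal{A}$ is a Mathieu subspace if for all $a,b\in\mathcal{A}$ with $a^m\in V$ for all $m\ge 1$, one has $a^mb\in V$ for all $m\gg 0$. *)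

theory Defs
  imports "HOL-Computational_Algebra.Polynomial"
begin

text \<open>The K-algebra endomorphism phi of K[x] with phi(x) = w is composition with w;
  delta = id - phi.\<close>
definition delta_map :: "'a::field poly \<Rightarrow> 'a poly \<Rightarrow> 'a poly" where
  "delta_map w p = p - pcompose p w"

definition rad_set :: "'a::field poly set \<Rightarrow> 'a poly set" where
  "rad_set V = {a. eventually (\<lambda>m. a ^ m \<in> V) sequentially}"

definition ksubspace :: "'a::field poly set \<Rightarrow> bool" where
  "ksubspace V \<longleftrightarrow> 0 \<in> V \<and> (\<forall>p\<in>V. \<forall>q\<in>V. p + q \<in> V) \<and> (\<forall>c. \<forall>p\<in>V. smult c p \<in> V)"

definition mathieu_subspace :: "'a::field poly set \<Rightarrow> bool" where
  "mathieu_subspace V \<longleftrightarrow> ksubspace V \<and>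
     (\<forall>a b. (\<forall>m\<ge>1. a ^ m \<in> V) \<longrightarrow> eventually (\<lambda>m. a ^ m * b \<in> V) sequentially)"

end

theory Submission imports Defs begin

text \<open>Suppose \<open>\<delta> p ^ k = \<delta> q\<close> with \<open>deg p \<ge> 1\<close> and \<open>k \<ge> 2\<close> invertible in
  the field. Then \<open>deg q = k deg p\<close>. Put \<open>Q = (-p)\<circ>w\<close>, so that \<open>\<delta> p = Q + p\<close>, and divide
  \<open>q + (-p)^k = s (-p)^(k-1) + t\<close>. Composing with \<open>w\<close> and expanding \<open>(Q + p)^k\<close> binomially
  gives \<open>Q^(k-1) (s\<circ>w + k p) = q - R - t\<circ>w\<close>, where every term on the right has degree at
  most \<open>deg Q^(k-1)\<close> because \<open>deg w \<ge> 2\<close>. So \<open>s\<circ>w + k p\<close> is constant and \<open>p = S\<circ>w\<close>;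
  then \<open>\<delta> p = (\<delta> S)\<circ>w\<close> and \<open>(\<delta> S)^k\<close> again lies in the image of \<open>\<delta>\<close>, so induction on
  \<open>deg p\<close> gives \<open>\<delta> p = 0\<close>. Since \<open>2\<close> or \<open>3\<close> is nonzero in any field, \<open>f, f^2, f^3\<close> in
  the image of \<open>\<delta>\<close> force \<open>f = 0\<close>; the claims about the radical and Mathieu subspaces
  follow formally.\<close>

lemma pcompose_power: "pcompose (p ^ k) w = pcompose p w ^ k"
  for p w :: "'a::comm_semiring_1 poly"
  by (induction k) (simp_all add: pcompose_mult pcompose_1)

lemma delta_map_0 [simp]: "delta_map w 0 = 0"
  by (simp add: delta_map_def)

lemma delta_map_add: "delta_map w (p + q) = delta_map w p + delta_map w q"
  by (simp add: delta_map_def pcompose_add)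

lemma delta_map_smult: "delta_map w (smult c p) = smult c (delta_map w p)"
  by (simp add: delta_map_def pcompose_smult smult_diff_right)

lemma delta_map_pcompose: "delta_map w (pcompose p w) = pcompose (delta_map w p) w"
  by (simp add: delta_map_def pcompose_diff)

lemma degree_delta_map:
  fixes w q :: "'a::field poly"
  assumes "degree w \<ge> 2"
  shows "degree (delta_map w q) = degree q * degree w"
proof (cases "degree q = 0")
  case True
  then obtain a where "q = [:a:]" using degree0_coeffs by blast
  then show ?thesis by (simp add: delta_map_def)
next
  case False
  have "degree q < degree (pcompose q w)"
    using False assms by (simp add: degree_pcompose)
  then have "degree (q + - pcompose q w) = degree (- pcompose q w)"
    by (intro degree_add_eq_right) simp
  then show ?thesis by (simp add: delta_map_def degree_pcompose)
qed

lemma in_range_delta_map_if_pcompose_in_range: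
  assumes "pcompose g w \<in> range (delta_map w)"
  shows "g \<in> range (delta_map w)"
proof -
  obtain q where "pcompose g w = delta_map w q" using assms by blast
  then have "delta_map w (q + g) = g" by (simp add: delta_map_def pcompose_add)
  then show ?thesis by (metis rangeI)
qed

lemma degree_eq_0_if_mult_degree_le:
  fixes P X :: "'a::idom poly"
  assumes "degree (P * X) \<le> degree P" "P \<noteq> 0"
  shows "degree X = 0"
  using assms degree_mult_eq[of P X] by (cases "X = 0") auto

lemma pcompose_eq_if_pcompose_add_smult_eq_const:
  fixes p s w :: "'a::field poly"
  assumes "pcompose s w + smult a p = [:c:]" "a \<noteq> 0"
  shows "p = pcompose (smult (inverse a) ([:c:] - s)) w"
proof -
  have "smult a p = [:c:] - pcompose s w" using assms(1) by (simp add: eq_diff_eq add.commute)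
  then have "p = smult (inverse a) ([:c:] - pcompose s w)"
    using assms(2) by (metis smult_smult left_inverse smult_1_left)
  then show ?thesis by (simp add: pcompose_smult pcompose_diff)
qed

lemma binomial_split_two:
  fixes a b :: "'a::comm_ring_1"
  assumes "k = Suc (Suc m)"
  shows "(b + a) ^ k = b ^ k + of_nat k * a * b ^ (k - 1)
           + (\<Sum>j\<le>m. of_nat (k choose (j + 2)) * a ^ (j + 2) * b ^ (m - j))"
proof -
  have "(b + a) ^ k = (\<Sum>j\<le>Suc (Suc m). of_nat (k choose j) * a ^ j * b ^ (k - j))"
    using binomial_ring[of a b k] assms by (simp add: add.commute)
  also have "\<dots> = b ^ k + of_nat k * a * b ^ (k - 1)
           + (\<Sum>j\<le>m. of_nat (k choose (j + 2)) * a ^ (j + 2) * b ^ (m - j))"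
    unfolding sum.atMost_Suc_shift using assms by simp
  finally show ?thesis .
qed

lemma degree_binomial_tail_le:
  fixes p Q :: "'a::comm_semiring_1 poly"
  assumes "degree Q \<le> degree p * d" "d \<ge> 2"
  shows "degree (\<Sum>j\<le>m. of_nat (c j) * p ^ (j + 2) * Q ^ (m - j)) \<le> Suc m * (degree p * d)"
proof (rule degree_sum_le[OF finite_atMost])
  fix j assume "j \<in> {..m}"
  define n where "n = degree p"
  have "degree (Q ^ (m - j)) \<le> (m - j) * (n * d)"
    using order_trans[OF degree_power_le[of Q "m - j"] mult_le_mono1[OF assms(1)]]
    by (simp add: n_def mult.commute)
  moreover have "degree (of_nat (c j) * p ^ (j + 2) :: 'a poly) \<le> (j + 2) * n"
    using degree_mult_le[of "of_nat (c j)" "p ^ (j + 2)"] degree_power_le[of p "j + 2"]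
    by (simp add: n_def mult.commute)
  ultimately have "degree (of_nat (c j) * p ^ (j + 2) * Q ^ (m - j) :: 'a poly)
      \<le> (j + 2) * n + (m - j) * (n * d)"
    using degree_mult_le[of "of_nat (c j) * p ^ (j + 2)" "Q ^ (m - j)"] by linarith
  also have "\<dots> \<le> Suc m * (n * d)"
  proof -
    have "j + 2 \<le> (j + 1) * d"
      using \<open>d \<ge> 2\<close> mult_le_mono2[of 2 d "j + 1"] by simp
    then have "(j + 2) * n \<le> (j + 1) * (n * d)"
      by (metis mult.assoc mult.commute mult_le_mono1)
    moreover have "Suc m * (n * d) = (m - j) * (n * d) + (j + 1) * (n * d)"
      using \<open>j \<in> {..m}\<close> by (simp flip: add_mult_distrib)
    ultimately show ?thesis by linarith
  qed
  finally show "degree (of_nat (c j) * p ^ (j + 2) * Q ^ (m - j)) \<le> Suc m * (degree p * d)"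
    by (simp add: n_def)
qed

lemma degree_eq_if_delta_map_power_eq:
  fixes w p q :: "'a::field poly"
  assumes "degree w \<ge> 2" "degree p \<noteq> 0" "delta_map w p ^ k = delta_map w q"
  shows "degree q = k * degree p"
proof -
  have "delta_map w p \<noteq> 0"
    using assms degree_delta_map[of w p] by (metis degree_0 mult_is_0 not_numeral_le_zero)
  then have "degree q * degree w = k * degree p * degree w"
    using assms degree_delta_map[OF assms(1)] degree_power_eq by (metis mult.assoc)
  then show ?thesis using assms(1) by simp
qed

lemma in_pcompose_range_if_delta_map_power_in_range:
  fixes w p :: "'a::field poly"
  assumes w: "degree w \<ge> 2" and k: "k \<ge> 2" "of_nat k \<noteq> (0::'a)"
    and "delta_map w p ^ k \<in> range (delta_map w)"
  shows "p \<in> range (\<lambda>S. pcompose S w)"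
proof (cases "degree p = 0")
  case True
  then obtain a where "p = [:a:]" using degree0_coeffs by blast
  then show ?thesis by (metis pcompose_const rangeI)
next
  case False
  obtain q where q: "delta_map w p ^ k = delta_map w q" using assms(4) by blast
  obtain m where m: "k = Suc (Suc m)" using k by (metis add_2_eq_Suc le_Suc_ex)
  define n where "n = degree p"
  define d where "d = degree w"
  define Q where "Q = pcompose (- p) w"
  define R where "R = (\<Sum>j\<le>m. of_nat (k choose (j + 2)) * p ^ (j + 2) * Q ^ (m - j))"
  define r where "r = q + (- p) ^ k"
  define s where "s = r div (- p) ^ (k - 1)"
  define t where "t = r mod (- p) ^ (k - 1)"
  have "d \<ge> 2" "p \<noteq> 0" using w False by (auto simp: d_def)
  have dQ: "degree Q = n * d" by (simp add: Q_def n_def d_def degree_pcompose)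
  then have "Q \<noteq> 0" using \<open>d \<ge> 2\<close> False by (auto simp: n_def)
  have "pcompose r w = q - of_nat k * p * Q ^ (k - 1) - R"
  proof -
    have "delta_map w p = Q + p" by (simp add: delta_map_def Q_def pcompose_uminus)
    then have "pcompose q w = q - (Q + p) ^ k" using q by (simp add: delta_map_def[of w q])
    then show ?thesis
      using binomial_split_two[OF m, of Q p] by (simp add: r_def R_def Q_def pcompose_add pcompose_power)
  qed
  moreover have "pcompose r w = pcompose s w * Q ^ (k - 1) + pcompose t w"
  proof -
    have "r = s * (- p) ^ (k - 1) + t" unfolding s_def t_def by (rule div_mult_mod_eq[symmetric])
    then show ?thesis by (simp add: Q_def pcompose_add pcompose_mult pcompose_power)
  qed
  ultimately have key: "Q ^ (k - 1) * (pcompose s w + of_nat k * p) = q - R - pcompose t w"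
    by (simp add: algebra_simps)
  have "degree (q - R - pcompose t w) \<le> degree (Q ^ (k - 1))"
  proof -
    have "degree q \<le> (k - 1) * (n * d)"
      using degree_eq_if_delta_map_power_eq[OF w False q] \<open>d \<ge> 2\<close> m
        mult_le_mono[of k "(k - 1) * 2" n n] mult_le_mono2[of 2 d "(k - 1) * n"]
      by (simp add: n_def algebra_simps)
    moreover have "degree R \<le> (k - 1) * (n * d)"
      using degree_binomial_tail_le[where p = p and Q = Q and d = d and m = m
          and c = "\<lambda>j. k choose (j + 2)"] dQ \<open>d \<ge> 2\<close> m
      by (simp add: R_def n_def)
    moreover have "degree t \<le> (k - 1) * n"
      using degree_mod_less[of "(- p) ^ (k - 1)" r] degree_power_eq[of "- p" "k - 1"] \<open>p \<noteq> 0\<close>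
      by (cases "t = 0") (auto simp: t_def n_def)
    then have "degree (pcompose t w) \<le> (k - 1) * (n * d)"
      by (simp add: degree_pcompose d_def)
    ultimately show ?thesis
      using degree_power_eq[OF \<open>Q \<noteq> 0\<close>, of "k - 1"] dQ by (simp add: degree_diff_le)
  qed
  then obtain c where "pcompose s w + of_nat k * p = [:c:]"
    using degree_eq_0_if_mult_degree_le[of "Q ^ (k - 1)"] key \<open>Q \<noteq> 0\<close>
    by (metis degree0_coeffs power_not_zero)
  then have "pcompose s w + smult (of_nat k) p = [:c:]" by (simp add: of_nat_poly)
  then show ?thesis using pcompose_eq_if_pcompose_add_smult_eq_const k(2) by blast
qed

lemma delta_map_eq_0_if_power_in_range:
  fixes w p :: "'a::field poly"
  assumes w: "degree w \<ge> 2" and k: "k \<ge> 2" "of_nat k \<noteq> (0::'a)"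
  shows "delta_map w p ^ k \<in> range (delta_map w) \<Longrightarrow> delta_map w p = 0"
proof (induction "degree p" arbitrary: p rule: less_induct)
  case less
  then obtain S where S: "p = pcompose S w"
    using in_pcompose_range_if_delta_map_power_in_range[OF w k] by blast
  show ?case
  proof (cases "degree S = 0")
    case True
    then obtain a where "S = [:a:]" using degree0_coeffs by blast
    then show ?thesis by (simp add: S delta_map_def)
  next
    case False
    then have "degree S < degree p" using w by (simp add: S degree_pcompose)
    have "pcompose (delta_map w S ^ k) w \<in> range (delta_map w)"
      using less.prems by (simp add: S delta_map_pcompose pcompose_power)
    then have "delta_map w S = 0"
      using less.hyps[OF \<open>degree S < degree p\<close>] in_range_delta_map_if_pcompose_in_range by blast
    then show ?thesis by (simp add: S delta_map_pcompose)
  qed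
qed

lemma two_neq_zero_or_three_neq_zero: "(2::'a::field) \<noteq> 0 \<or> (3::'a) \<noteq> 0"
proof (rule disjCI)
  assume "\<not> (3::'a) \<noteq> 0"
  moreover have "(3::'a) = 2 + 1" by simp
  ultimately show "(2::'a) \<noteq> 0" by (metis add_0 one_neq_zero)
qed

lemma eq_0_if_powers_in_range_delta_map:
  fixes w f :: "'a::field poly"
  assumes "degree w \<ge> 2" and "\<forall>i\<in>{1..3::nat}. f ^ i \<in> range (delta_map w)"
  shows "f = 0"
proof -
  have f: "f \<in> range (delta_map w)" "f ^ 2 \<in> range (delta_map w)" "f ^ 3 \<in> range (delta_map w)"
    using assms(2) by (auto dest: bspec[of _ _ 1] bspec[of _ _ 2] bspec[of _ _ 3])
  obtain p where p: "f = delta_map w p" using f(1) by blast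
  from two_neq_zero_or_three_neq_zero show ?thesis
  proof
    assume "(2::'a) \<noteq> 0"
    then show ?thesis using delta_map_eq_0_if_power_in_range[OF assms(1), of 2 p] f p by simp
  next
    assume "(3::'a) \<noteq> 0"
    then show ?thesis using delta_map_eq_0_if_power_in_range[OF assms(1), of 3 p] f p by simp
  qed
qed

lemma rad_set_eq_0I:
  fixes V :: "'a::field poly set"
  assumes "0 \<in> V" and powers: "\<And>f. \<forall>i\<in>{1..N}. f ^ i \<in> V \<Longrightarrow> f = 0"
  shows "rad_set V = {0}"
proof
  show "{0} \<subseteq> rad_set V"
    using assms(1) by (auto simp: rad_set_def eventually_sequentially power_0_left intro!: exI[of _ 1])
  show "rad_set V \<subseteq> {0}"
  proof
    fix a assume "a \<in> rad_set V"
    then obtain M where M: "\<And>m. m \<ge> M \<Longrightarrow> a ^ m \<in> V"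
      by (auto simp: rad_set_def eventually_sequentially)
    have "(a ^ Suc M) ^ i \<in> V" if "i \<in> {1..N}" for i
    proof -
      have "M \<le> Suc M * i" using that mult_le_mono2[of 1 i "Suc M"] by simp
      from M[OF this] show ?thesis by (simp only: power_mult)
    qed
    then have "a ^ Suc M = 0" using powers by blast
    then show "a \<in> {0}" by auto
  qed
qed

lemma mathieu_subspace_if_only_0_has_powers_in:
  fixes V :: "'a::field poly set"
  assumes "ksubspace V" and "\<And>a. \<forall>m\<ge>1. a ^ m \<in> V \<Longrightarrow> a = 0"
  shows "mathieu_subspace V"
  unfolding mathieu_subspace_def
proof (intro conjI allI impI)
  fix a b :: "'a poly"
  assume "\<forall>m\<ge>1. a ^ m \<in> V"
  then have "a = 0" using assms(2) by blast
  moreover have "0 \<in> V" using assms(1) by (simp add: ksubspace_def)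
  ultimately show "\<forall>\<^sub>F m in sequentially. a ^ m * b \<in> V"
    by (auto simp: eventually_sequentially power_0_left intro!: exI[of _ 1])
qed (fact assms(1))

lemma ksubspace_image_delta_map:
  assumes "ksubspace V"
  shows "ksubspace (delta_map w ` V)"
  using assms unfolding ksubspace_def
  by (auto simp flip: delta_map_add delta_map_smult intro!: image_eqI[of _ _ 0])

theorem proposition3p7:
  fixes w :: "'a::field poly"
  assumes "degree w \<ge> 2"
  shows "(\<forall>f. (\<forall>i\<in>{1..3::nat}. f ^ i \<in> range (delta_map w)) \<longrightarrow> f = 0)
       \<and> rad_set (range (delta_map w)) = {0}
       \<and> (\<forall>V. ksubspace V \<longrightarrow> mathieu_subspace (delta_map w ` V))"
proof (intro conjI allI impI)
  show "f = 0" if "\<forall>i\<in>{1..3::nat}. f ^ i \<in> range (delta_map w)" for f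
    using eq_0_if_powers_in_range_delta_map[OF assms that] .
  show "rad_set (range (delta_map w)) = {0}"
    using eq_0_if_powers_in_range_delta_map[OF assms]
    by (intro rad_set_eq_0I) (auto intro: range_eqI[of _ _ 0])
  show "mathieu_subspace (delta_map w ` V)" if "ksubspace V" for V
  proof (rule mathieu_subspace_if_only_0_has_powers_in[OF ksubspace_image_delta_map[OF that]])
    fix a assume "\<forall>m\<ge>1. a ^ m \<in> delta_map w ` V"
    then have "\<forall>i\<in>{1..3::nat}. a ^ i \<in> range (delta_map w)"
      using image_subset_iff by fastforce
    then show "a = 0" by (rule eq_0_if_powers_in_range_delta_map[OF assms])
  qed
qed

end
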